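(* Let $\xi$ be a one-dimensional white noise on $U=]0,+\infty[$ and let $\phi\in\mathcal{D}$, $\phi\not\equiv0$. Then the random vector $\big(\langle\xi,\phi\rangle,\langle\dot\xi,\phi\rangle,\langle\ddot\xi,\phi\rangle,\langle\dddot\xi,\phi\rangle\big)$ has a law that is absolutely continuous with respect to Lebesgue measure on $\mathbb{R}^4$.
   Context: $\mathcal{D}=C_c^\infty(]0,+\infty[)$. A one-dimensional white noise $\xi$ is a random distribution such that the variables $\langle\xi,\phi\rangle$, $\phi\in\mathcal{D}$, are jointly centred Gaussian with $E[\langle\xi,\phi\rangle\langle\xi,\psi\rangle]=\int_0^\infty\phi\psi$. Derivatives of random distributions are defined by $\langle\xi^{(k)},\phi\rangle=(-1)^k\langle\xi,\phi^{(k)}\rangle$. *)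

theory Defs
  imports "HOL-Probability.Probability"
begin

definition smooth_fun :: "(real \<Rightarrow> real) \<Rightarrow> bool" where
  "smooth_fun f \<longleftrightarrow> (\<forall>n x. ((deriv ^^ n) f) differentiable (at x))"

definition test_fun :: "(real \<Rightarrow> real) \<Rightarrow> bool" where
  "test_fun f \<longleftrightarrow> smooth_fun f \<and>
     (\<exists>a b. 0 < a \<and> a \<le> b \<and> (\<forall>x. x \<notin> {a..b} \<longrightarrow> f x = 0))"

definition centred_gaussian :: "'a measure \<Rightarrow> ('a \<Rightarrow> real) \<Rightarrow> real \<Rightarrow> bool" where
  "centred_gaussian M X v \<longleftrightarrow> X \<in> borel_measurable M \<and> 0 \<le> v \<and>
     (if v = 0 then (AE \<omega> in M. X \<omega> = 0)
      else distributed M lborel X (normal_density 0 (sqrt v)))"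

definition white_noise :: "'a measure \<Rightarrow> ((real \<Rightarrow> real) \<Rightarrow> 'a \<Rightarrow> real) \<Rightarrow> bool" where
  "white_noise M W \<longleftrightarrow> prob_space M \<and>
     (\<forall>phi. test_fun phi \<longrightarrow> W phi \<in> borel_measurable M) \<and>
     (\<forall>(n::nat) (phis :: nat \<Rightarrow> real \<Rightarrow> real) (c :: nat \<Rightarrow> real).
        (\<forall>i<n. test_fun (phis i)) \<longrightarrow>
        centred_gaussian M (\<lambda>\<omega>. \<Sum>i<n. c i * W (phis i) \<omega>)
          (\<Sum>i<n. \<Sum>j<n. c i * c j *
             (LINT x:{0<..}|lborel. phis i x * phis j x)))"

text \<open>Pairing of the k-th distributional derivative: <xi^(k), phi> = (-1)^k <xi, phi^(k)>.\<close>
definition deriv_pair :: "((real \<Rightarrow> real) \<Rightarrow> 'a \<Rightarrow> real) \<Rightarrow> nat \<Rightarrow> (real \<Rightarrow> real) \<Rightarrow> 'a \<Rightarrow> real" where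
  "deriv_pair W k phi = (\<lambda>\<omega>. (-1) ^ k * W ((deriv ^^ k) phi) \<omega>)"

end

theory Submission
  imports Defs
begin

text \<open>
  Write \<open>\<psi>\<^sub>k\<close> for the \<open>k\<close>-th derivative of \<open>\<phi>\<close>. A vanishing combination \<open>\<Sum> c\<^sub>k \<psi>\<^sub>k\<close> would
  make \<open>\<phi>\<close> a solution of a linear ODE with constant coefficients that vanishes near \<open>0\<close>, hence
  \<open>\<phi> = 0\<close>; so the Gram matrix of \<open>\<psi>\<^sub>0, \<dots>, \<psi>\<^sub>3\<close> in \<open>L\<^sup>2(]0,\<infinity>[)\<close> is positive definite. By the
  white-noise axioms every linear functional \<open>t \<bullet> X\<close> of the random vector \<open>X\<close> is centred Gaussian
  with variance \<open>Q(t)\<close>, the Gram form of the coefficients; a Cholesky factorisation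
  \<open>Q(t) = \<bar>A t\<bar>\<^sup>2\<close> with \<open>A\<close> invertible shows that \<open>X\<close> has the characteristic function of
  \<open>A\<^sup>T Z\<close>, \<open>Z\<close> standard Gaussian. Characteristic functions determine finite Borel measures on
  \<open>\<real>\<^sup>n\<close> (via uniform approximation of products of compactly supported coordinate functions by
  trigonometric polynomials), so the law of \<open>X\<close> is the image of an absolutely continuous law
  under an invertible linear map.
\<close>

section \<open>Trigonometric polynomials\<close>

definition trig_poly :: "('a::real_inner \<Rightarrow> real) \<Rightarrow> bool" where
  "trig_poly f \<longleftrightarrow> (\<exists>l::('a \<times> complex) list. \<forall>x.
      complex_of_real (f x) = (\<Sum>p\<leftarrow>l. snd p * iexp (fst p \<bullet> x)))"

lemma trig_poly_const: "trig_poly (\<lambda>x. c)"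
  unfolding trig_poly_def by (rule exI[of _ "[(0, complex_of_real c)]"]) simp

lemma trig_poly_add:
  assumes "trig_poly f" "trig_poly g"
  shows "trig_poly (\<lambda>x. f x + g x)"
proof -
  obtain l1 l2 where "\<And>x. complex_of_real (f x) = (\<Sum>p\<leftarrow>l1. snd p * iexp (fst p \<bullet> x))"
    and "\<And>x. complex_of_real (g x) = (\<Sum>p\<leftarrow>l2. snd p * iexp (fst p \<bullet> x))"
    using assms unfolding trig_poly_def by blast
  then show ?thesis unfolding trig_poly_def by (intro exI[of _ "l1 @ l2"]) simp
qed

lemma sum_list_mult_sum_list:
  fixes a :: "'x \<Rightarrow> 'c::semiring_0" and b :: "'y \<Rightarrow> 'c"
  shows "(\<Sum>p\<leftarrow>l1. a p) * (\<Sum>q\<leftarrow>l2. b q) = (\<Sum>r\<leftarrow>concat (map (\<lambda>p. map (Pair p) l2) l1). a (fst r) * b (snd r))"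
proof (induction l1)
  case Nil
  then show ?case by simp
next
  case (Cons p l1)
  have "(\<Sum>q\<leftarrow>l2. a p * b q) = a p * (\<Sum>q\<leftarrow>l2. b q)"
    by (induction l2) (simp_all add: algebra_simps)
  then show ?case using Cons by (simp add: algebra_simps comp_def)
qed

lemma trig_poly_mult:
  assumes "trig_poly f" "trig_poly g"
  shows "trig_poly (\<lambda>x. f x * g x)"
proof -
  obtain l1 l2 where f: "\<And>x. complex_of_real (f x) = (\<Sum>p\<leftarrow>l1. snd p * iexp (fst p \<bullet> x))"
    and g: "\<And>x. complex_of_real (g x) = (\<Sum>p\<leftarrow>l2. snd p * iexp (fst p \<bullet> x))"
    using assms unfolding trig_poly_def by blast
  define pairs where "pairs = concat (map (\<lambda>p. map (Pair p) l2) l1)"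
  define l where "l = map (\<lambda>r. (fst (fst r) + fst (snd r), snd (fst r) * snd (snd r))) pairs"
  have "complex_of_real (f x * g x) = (\<Sum>p\<leftarrow>l. snd p * iexp (fst p \<bullet> x))" for x
  proof -
    have "complex_of_real (f x * g x) = (\<Sum>r\<leftarrow>pairs.
        (snd (fst r) * iexp (fst (fst r) \<bullet> x)) * (snd (snd r) * iexp (fst (snd r) \<bullet> x)))"
      unfolding of_real_mult f g pairs_def by (rule sum_list_mult_sum_list)
    also have "\<dots> = (\<Sum>p\<leftarrow>l. snd p * iexp (fst p \<bullet> x))"
      unfolding l_def by (simp add: comp_def inner_add_left distrib_left exp_add algebra_simps)
    finally show ?thesis .
  qed
  then show ?thesis unfolding trig_poly_def by blast
qed

lemma trig_poly_prod:
  "finite S \<Longrightarrow> (\<And>b. b \<in> S \<Longrightarrow> trig_poly (f b)) \<Longrightarrow> trig_poly (\<lambda>x. \<Prod>b\<in>S. f b x)"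
  by (induction S rule: finite_induct) (simp_all add: trig_poly_const trig_poly_mult)

lemma trig_poly_cos: "trig_poly (\<lambda>x. cos (t \<bullet> x))"
proof -
  have "complex_of_real (cos y) = (1/2) * iexp y + (1/2) * iexp (- y)" for y
  proof -
    have "complex_of_real (cos y) = cos (complex_of_real y)" by (simp add: cos_of_real)
    also have "\<dots> = (exp (\<i> * y) + exp (- (\<i> * y))) / 2" by (rule cos_exp_eq)
    finally show ?thesis by (simp add: field_simps)
  qed
  then show ?thesis unfolding trig_poly_def
    by (intro exI[of _ "[(t, 1/2), (-t, 1/2)]"]) (simp add: inner_minus_left)
qed

lemma trig_poly_sin: "trig_poly (\<lambda>x. sin (t \<bullet> x))"
proof -
  have "complex_of_real (sin y) = (1/(2*\<i>)) * iexp y + (- 1/(2*\<i>)) * iexp (- y)" for y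
  proof -
    have "complex_of_real (sin y) = sin (complex_of_real y)" by (simp add: sin_of_real)
    also have "\<dots> = (exp (\<i> * y) - exp (- (\<i> * y))) / (2*\<i>)" by (rule sin_exp_eq)
    finally show ?thesis by (simp add: field_simps)
  qed
  then show ?thesis unfolding trig_poly_def
    by (intro exI[of _ "[(t, 1/(2*\<i>)), (-t, - 1/(2*\<i>))]"]) (simp add: inner_minus_left)
qed

lemma trig_poly_compose_inner:
  assumes "trig_poly (p :: real \<Rightarrow> real)"
  shows "trig_poly (\<lambda>x. p (x \<bullet> b))"
proof -
  obtain l where l: "\<And>x. complex_of_real (p x) = (\<Sum>q\<leftarrow>l. snd q * iexp (fst q \<bullet> x))"
    using assms unfolding trig_poly_def by blast
  show ?thesis unfolding trig_poly_def
    by (rule exI[of _ "map (\<lambda>q. (fst q *\<^sub>R b, snd q)) l"]) (simp add: l comp_def inner_commute)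
qed

lemma trig_poly_continuous: "trig_poly f \<Longrightarrow> continuous_on UNIV f"
proof -
  assume "trig_poly f"
  then obtain l where l: "\<And>x. complex_of_real (f x) = (\<Sum>p\<leftarrow>l. snd p * iexp (fst p \<bullet> x))"
    unfolding trig_poly_def by blast
  have "f = (\<lambda>x. Re (\<Sum>p\<leftarrow>l. snd p * iexp (fst p \<bullet> x)))"
    by (rule ext) (metis Re_complex_of_real l)
  moreover have "continuous_on UNIV (\<lambda>x. (\<Sum>p\<leftarrow>l. snd p * iexp (fst p \<bullet> x)))"
    by (induction l) (auto intro!: continuous_intros)
  ultimately show ?thesis by (auto intro!: continuous_intros)
qed

lemma bounded_linear_complex_real:
  fixes g :: "complex \<Rightarrow> real"
  assumes "bounded_linear g"
  shows "g z = Re z * g 1 + Im z * g \<i>"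
proof -
  interpret bounded_linear g by fact
  have "z = Re z *\<^sub>R 1 + Im z *\<^sub>R \<i>" by (simp add: complex_eq_iff)
  then have "g z = g (Re z *\<^sub>R 1 + Im z *\<^sub>R \<i>)" by simp
  then show ?thesis by (simp add: add scale)
qed

lemma trig_poly_real_polynomial_cis:
  fixes g :: "complex \<Rightarrow> real"
  assumes "real_polynomial_function g"
  shows "trig_poly (\<lambda>x::real. g (cis (a * x)))"
  using assms
proof (induction rule: real_polynomial_function.induct)
  case (linear f)
  have eq: "(\<lambda>x. f (cis (a * x))) = (\<lambda>x. cos (a \<bullet> x) * f 1 + sin (a \<bullet> x) * f \<i>)"
  proof
    fix x
    show "f (cis (a * x)) = cos (a \<bullet> x) * f 1 + sin (a \<bullet> x) * f \<i>"
      using bounded_linear_complex_real[OF linear, of "cis (a * x)"] by (simp add: inner_real_def)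
  qed
  show ?case unfolding eq
    by (intro trig_poly_add trig_poly_mult trig_poly_cos trig_poly_sin trig_poly_const)
next
  case (const c)
  then show ?case by (rule trig_poly_const)
next
  case (add f g)
  then show ?case by (intro trig_poly_add)
next
  case (mult f g)
  then show ?case by (intro trig_poly_mult)
qed

lemma integrable_iexp_inner:
  assumes "finite_measure M" "sets M = sets borel"
  shows "integrable M (\<lambda>x. iexp (t \<bullet> x))"
proof -
  interpret finite_measure M by fact
  have "(\<lambda>x. iexp (t \<bullet> x)) \<in> borel_measurable M"
    unfolding measurable_cong_sets[OF assms(2) refl]
    by (intro borel_measurable_continuous_onI continuous_intros)
  then show ?thesis
    by (intro integrable_const_bound[where B=1]) (auto simp: norm_exp_i_times)
qed

lemma integral_sum_list_iexp:
  assumes "finite_measure M" "sets M = sets borel"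
  shows "integrable M (\<lambda>x. (\<Sum>p\<leftarrow>l. snd p * iexp (fst p \<bullet> x))) \<and>
    (\<integral>x. (\<Sum>p\<leftarrow>l. snd p * iexp (fst p \<bullet> x)) \<partial>M) = (\<Sum>p\<leftarrow>l. snd p * (\<integral>x. iexp (fst p \<bullet> x) \<partial>M))"
proof (induction l)
  case Nil
  then show ?case by simp
next
  case (Cons p l)
  have "integrable M (\<lambda>x. snd p * iexp (fst p \<bullet> x))"
    using integrable_iexp_inner[OF assms] by (rule integrable_mult_right)
  with Cons show ?case by simp
qed

lemma integral_trig_poly_eq:
  assumes "finite_measure M" "sets M = sets borel" "finite_measure N" "sets N = sets borel"
    and char: "\<And>t. (\<integral>x. iexp (t \<bullet> x) \<partial>M) = (\<integral>x. iexp (t \<bullet> x) \<partial>N)"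
    and "trig_poly f"
  shows "(\<integral>x. f x \<partial>M) = (\<integral>x. f x \<partial>N)"
proof -
  obtain l where l: "\<And>x. complex_of_real (f x) = (\<Sum>p\<leftarrow>l. snd p * iexp (fst p \<bullet> x))"
    using \<open>trig_poly f\<close> unfolding trig_poly_def by blast
  have "complex_of_real (\<integral>x. f x \<partial>M) = (\<Sum>p\<leftarrow>l. snd p * (\<integral>x. iexp (fst p \<bullet> x) \<partial>M))"
    unfolding integral_complex_of_real[symmetric] l using integral_sum_list_iexp[OF assms(1,2)] by blast
  also have "\<dots> = (\<Sum>p\<leftarrow>l. snd p * (\<integral>x. iexp (fst p \<bullet> x) \<partial>N))"
    by (simp only: char)
  also have "\<dots> = complex_of_real (\<integral>x. f x \<partial>N)"
    unfolding integral_complex_of_real[symmetric] l using integral_sum_list_iexp[OF assms(3,4)] by metis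
  finally show ?thesis by simp
qed

section \<open>Characteristic functions determine finite Borel measures\<close>

lemma abs_Arg_ge_if_Re_lt_cos:
  assumes "norm w = 1" "Re w < cos c" "0 \<le> c" "c \<le> pi"
  shows "c \<le> \<bar>Arg w\<bar>"
proof (rule ccontr)
  assume "\<not> c \<le> \<bar>Arg w\<bar>"
  then have "cos c < cos \<bar>Arg w\<bar>"
    using assms by (intro cos_monotone_0_pi) auto
  moreover have "w \<noteq> 0" using assms(1) by auto
  then have "w = cis (Arg w)"
    using Arg_correct[of w] assms(1) by (simp add: sgn_div_norm)
  then have "Re w = cos \<bar>Arg w\<bar>"
    by (metis abs_if cis.sel(1) cos_minus)
  ultimately show False using assms(2) by simp
qed

lemma apply_Arg_cis_rescale:
  assumes R: "0 < R" and x: "\<bar>x\<bar> \<le> R" and h: "h (- R) = h R"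
  shows "h (R / pi * Arg (cis (pi / R * x))) = h x"
proof (cases "x = - R")
  case True
  then have "cis (pi / R * x) = -1" using R by (simp add: complex_eq_iff)
  moreover have "Arg (-1) = pi" using Arg_of_real[of "-1"] by simp
  ultimately show ?thesis using True R h by simp
next
  case False
  with x have "- R < x" "x \<le> R" by (auto simp: abs_le_iff)
  then have "(- R) * pi < x * pi" "x * pi \<le> R * pi"
    by (intro mult_strict_right_mono mult_right_mono; simp)+
  then have "- pi < pi / R * x" "pi / R * x \<le> pi"
    using R by (simp_all add: field_simps)
  then have "Arg (cis (pi / R * x)) = pi / R * x" by (intro Arg_cis) simp
  then show ?thesis using R by simp
qed

text \<open>Wrapping \<open>h\<close> around the unit circle by \<open>x \<mapsto> cis (\<pi> x / R)\<close>: as \<open>h\<close> vanishes near \<open>\<plusminus>R\<close>,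
  the jump of \<^const>\<open>Arg\<close> at \<open>-1\<close> does no harm.\<close>

lemma continuous_on_sphere_compose_Arg:
  fixes h :: "real \<Rightarrow> real"
  assumes cont: "continuous_on UNIV h"
    and supp: "\<And>x. L \<le> \<bar>x\<bar> \<Longrightarrow> h x = 0" and L: "0 < L" "L < R"
  shows "continuous_on (sphere 0 1) (\<lambda>z. h (R / pi * Arg z))"
proof -
  define F where "F z = h (R / pi * Arg z)" for z
  define S where "S = sphere (0::complex) 1"
  define c where "c = pi * L / R"
  have R: "0 < R" using L by simp
  have c: "0 < c" "c < pi"
    using L R by (auto simp: c_def divide_less_eq)
  have F_zero: "F w = 0" if "w \<in> S" "Re w < cos c" for w
  proof -
    have "pi * L / R \<le> \<bar>Arg w\<bar>"
      using abs_Arg_ge_if_Re_lt_cos[of w c] that c unfolding S_def c_def by simp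
    then have "L \<le> R * \<bar>Arg w\<bar> / pi"
      using R by (simp add: divide_le_eq le_divide_eq mult.commute)
    then have "L \<le> \<bar>R / pi * Arg w\<bar>"
      using R by (simp add: abs_mult)
    then show ?thesis unfolding F_def by (rule supp)
  qed
  have cos_c: "-1 < cos c" using cos_monotone_0_pi[of c pi] c by simp
  have "continuous (at z within S) F" if z: "z \<in> S" for z
  proof (cases "z \<in> \<real>\<^sub>\<le>\<^sub>0")
    case False
    have "isCont (\<lambda>w. R / pi * Arg w) z"
      using continuous_at_Arg[OF False] by (intro continuous_intros)
    moreover have "isCont h (R / pi * Arg z)"
      using cont by (simp add: continuous_on_eq_continuous_at)
    ultimately have "isCont F z"
      unfolding F_def by (rule continuous_at_compose[unfolded comp_def])
    then show ?thesis by (rule continuous_at_imp_continuous_within)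
  next
    case True
    then obtain r where "z = complex_of_real r" "r \<le> 0" by (auto simp: nonpos_Reals_def)
    with z have z_eq: "z = -1" by (simp add: S_def)
    have "eventually (\<lambda>w. F w = 0) (at z within S)"
      unfolding eventually_at_topological
      using z_eq cos_c F_zero
      by (intro exI[of _ "{w. Re w < cos c}"]) (auto intro!: open_Collect_less continuous_intros)
    then show ?thesis
      unfolding continuous_within using F_zero[OF z] z_eq cos_c by (simp add: tendsto_eventually)
  qed
  then show ?thesis
    unfolding F_def[abs_def] S_def[symmetric] continuous_on_eq_continuous_within by blast
qed

lemma abs_divide_one_plus_diff_le:
  fixes G H d :: real
  assumes "0 \<le> H" "H \<le> 1" "\<bar>G - H\<bar> < d" "0 < d"
  shows "\<bar>G / (1 + d) - H\<bar> \<le> 2 * d"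
proof -
  have "\<bar>G / (1 + d) - H\<bar> = \<bar>(G - H) - d * H\<bar> / (1 + d)"
    using assms(4) by (simp add: field_simps)
  also have "\<dots> \<le> (\<bar>G - H\<bar> + d * H) / (1 + d)"
    using assms by (intro divide_right_mono) (auto simp: abs_mult intro: order_trans[OF abs_triangle_ineq4])
  also have "\<dots> \<le> (d + d) / (1 + d)"
    using assms by (intro divide_right_mono add_mono) (auto simp: mult_le_cancel_left1)
  also have "\<dots> \<le> 2 * d" using assms(4) by (simp add: divide_le_eq)
  finally show ?thesis .
qed

lemma trig_poly_approx:
  fixes h :: "real \<Rightarrow> real"
  assumes cont: "continuous_on UNIV h" and range: "\<And>x. 0 \<le> h x \<and> h x \<le> 1"
    and supp: "\<And>x. L \<le> \<bar>x\<bar> \<Longrightarrow> h x = 0" and L: "0 < L" "L < R" and e: "0 < e"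
  obtains p where "trig_poly p" "\<And>x. \<bar>p x\<bar> \<le> 1" "\<And>x. \<bar>x\<bar> \<le> R \<Longrightarrow> \<bar>p x - h x\<bar> \<le> e"
proof -
  define F where "F z = h (R / pi * Arg z)" for z
  define S where "S = sphere (0::complex) 1"
  define d where "d = e / 2"
  have R: "0 < R" using L by simp
  have d: "0 < d" unfolding d_def using e by simp
  obtain g where g: "real_polynomial_function g" and gF: "\<And>z. z \<in> S \<Longrightarrow> \<bar>F z - g z\<bar> < d"
    using Stone_Weierstrass_real_polynomial_function[of S F d]
      continuous_on_sphere_compose_Arg[OF cont supp L] d
    unfolding F_def[abs_def] S_def by auto
  \<comment> \<open>Dividing by \<open>1 + d\<close> keeps \<open>p\<close> below \<open>1\<close> on the whole circle, hence everywhere.\<close>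
  define p where "p x = g (cis (pi / R * x)) / (1 + d)" for x
  have "trig_poly p"
    unfolding p_def[abs_def] divide_inverse
    by (intro trig_poly_mult trig_poly_real_polynomial_cis[OF g] trig_poly_const)
  have cis_S: "cis y \<in> S" for y unfolding S_def by simp
  have "\<bar>p x\<bar> \<le> 1" for x
  proof -
    have "\<bar>F (cis (pi / R * x))\<bar> \<le> 1" unfolding F_def using range by (simp add: abs_le_iff)
    then have "\<bar>g (cis (pi / R * x))\<bar> \<le> 1 + d"
      using gF[OF cis_S, of "pi / R * x"] by linarith
    then show ?thesis unfolding p_def using d by (simp add: divide_le_eq)
  qed
  moreover have "\<bar>p x - h x\<bar> \<le> e" if x: "\<bar>x\<bar> \<le> R" for x
  proof -
    have "F (cis (pi / R * x)) = h x"
      unfolding F_def using supp L by (intro apply_Arg_cis_rescale[OF R x]) simp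
    then have "\<bar>g (cis (pi / R * x)) - h x\<bar> < d"
      using gF[OF cis_S, of "pi / R * x"] by (simp add: abs_minus_commute)
    then have "\<bar>p x - h x\<bar> \<le> 2 * d"
      unfolding p_def using range[of x] d by (intro abs_divide_one_plus_diff_le) auto
    then show ?thesis unfolding d_def by simp
  qed
  ultimately show ?thesis using that \<open>trig_poly p\<close> by blast
qed

lemma abs_integral_diff_le_split:
  fixes M :: "'a::euclidean_space measure"
  assumes fin: "finite_measure M" and sets: "sets M = sets borel"
    and cont: "continuous_on UNIV f" "continuous_on UNIV g"
    and bounded: "\<And>x. \<bar>f x\<bar> \<le> 1" "\<And>x. \<bar>g x\<bar> \<le> 1"
    and K: "closed K" and close: "\<And>x. x \<in> K \<Longrightarrow> \<bar>f x - g x\<bar> \<le> \<delta>" and "0 \<le> \<delta>"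
  shows "\<bar>(\<integral>x. f x \<partial>M) - (\<integral>x. g x \<partial>M)\<bar> \<le> \<delta> * measure M UNIV + 2 * measure M (- K)"
proof -
  interpret finite_measure M by fact
  have integrable: "integrable M u" if "continuous_on UNIV u" "\<And>x. \<bar>u x\<bar> \<le> 1" for u :: "'a \<Rightarrow> real"
  proof -
    have "u \<in> borel_measurable M"
      unfolding measurable_cong_sets[OF sets refl] by (rule borel_measurable_continuous_onI[OF that(1)])
    then show ?thesis by (intro integrable_const_bound[where B=1]) (auto simp: that(2))
  qed
  have K_sets: "- K \<in> sets M" unfolding sets using K by (simp add: borel_closed borel_comp)
  then have indicator_integrable: "integrable M (indicator (- K) :: 'a \<Rightarrow> real)"
    by (simp add: emeasure_eq_measure)
  then have bound_integrable: "integrable M (\<lambda>x. \<delta> + 2 * indicator (- K) x :: real)"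
    by simp
  have "\<bar>f x - g x\<bar> \<le> \<delta> + 2 * indicator (- K) x" for x
    using close[of x] bounded[of x] \<open>0 \<le> \<delta>\<close> by (cases "x \<in> K") auto
  then have "\<bar>\<integral>x. f x - g x \<partial>M\<bar> \<le> (\<integral>x. \<delta> + 2 * indicator (- K) x \<partial>M)"
    using integrable[OF cont(1) bounded(1)] integrable[OF cont(2) bounded(2)] bound_integrable
    by (intro integral_abs_bound_integral) auto
  also have "\<dots> = \<delta> * measure M UNIV + 2 * measure M (- K)"
    using K_sets sets_eq_imp_space_eq[OF sets] indicator_integrable by (simp add: integral_add)
  finally show ?thesis
    using integrable[OF cont(1) bounded(1)] integrable[OF cont(2) bounded(2)] by simp
qed

lemma measure_compl_cbox_tendsto_0:
  fixes M :: "'a::euclidean_space measure"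
  assumes "finite_measure M" "sets M = sets borel"
  shows "(\<lambda>n. measure M (- cbox (- (real n *\<^sub>R One)) (real n *\<^sub>R One))) \<longlonglongrightarrow> 0"
proof -
  interpret finite_measure M by fact
  define C :: "nat \<Rightarrow> 'a set" where "C n = - cbox (- (real n *\<^sub>R One)) (real n *\<^sub>R One)" for n
  have sets: "range C \<subseteq> sets M"
    unfolding C_def assms(2) by (auto intro: borel_comp[OF borel_closed])
  have "C n \<subseteq> C m" if "m \<le> n" for m n
    unfolding C_def using that by (subst Compl_subset_Compl_iff, subst subset_box) auto
  then have dec: "decseq C" by (rule antimonoI)
  have "x \<notin> (\<Inter>n. C n)" for x
  proof -
    have "x \<in> (\<Union>n. box (- (real n *\<^sub>R One)) (real n *\<^sub>R One))"
      unfolding UN_box_eq_UNIV by (rule UNIV_I)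
    then obtain n where "x \<in> box (- (real n *\<^sub>R One)) (real n *\<^sub>R One)" by (rule UN_E)
    then have "x \<in> cbox (- (real n *\<^sub>R One)) (real n *\<^sub>R One)" by (rule subsetD[OF box_subset_cbox])
    then have "x \<notin> C n" by (simp add: C_def)
    then show ?thesis by auto
  qed
  then have "(\<Inter>n. C n) = {}" by auto
  then show ?thesis
    using finite_Lim_measure_decseq[OF sets dec] by (simp add: C_def)
qed

lemma ex_cbox_compl_measure_less:
  fixes M N :: "'a::euclidean_space measure"
  assumes M: "finite_measure M" "sets M = sets borel" and N: "finite_measure N" "sets N = sets borel"
    and e: "0 < e"
  shows "\<exists>R>L. measure M (- cbox (- (R *\<^sub>R One)) (R *\<^sub>R One)) < e \<and>
    measure N (- cbox (- (R *\<^sub>R One)) (R *\<^sub>R One)) < e"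
proof -
  obtain n0 :: nat where "L < real n0" using reals_Archimedean2 by blast
  have "\<forall>\<^sub>F n in sequentially. n0 \<le> n \<and>
      measure M (- cbox (- (real n *\<^sub>R One)) (real n *\<^sub>R One)) < e \<and>
      measure N (- cbox (- (real n *\<^sub>R One)) (real n *\<^sub>R One)) < e"
    using order_tendstoD(2)[OF measure_compl_cbox_tendsto_0[OF M] e]
      order_tendstoD(2)[OF measure_compl_cbox_tendsto_0[OF N] e]
    by (intro eventually_conj eventually_ge_at_top)
  then obtain n where "n0 \<le> n"
    and "measure M (- cbox (- (real n *\<^sub>R One)) (real n *\<^sub>R One)) < e"
    and "measure N (- cbox (- (real n *\<^sub>R One)) (real n *\<^sub>R One)) < e"
    using eventually_happens'[OF sequentially_bot] by blast
  moreover have "L < real n" using \<open>L < real n0\<close> \<open>n0 \<le> n\<close> by linarith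
  ultimately show ?thesis by blast
qed

lemma trig_poly_coordinate_product_approx:
  fixes h :: "'a::euclidean_space \<Rightarrow> real \<Rightarrow> real"
  assumes cont: "\<And>b. b \<in> Basis \<Longrightarrow> continuous_on UNIV (h b)"
    and range: "\<And>b x. b \<in> Basis \<Longrightarrow> 0 \<le> h b x \<and> h b x \<le> 1"
    and supp: "\<And>b x. b \<in> Basis \<Longrightarrow> L \<le> \<bar>x\<bar> \<Longrightarrow> h b x = 0" and "0 < L" "L < R" "0 < e"
  shows "\<exists>P. trig_poly P \<and> (\<forall>x. \<bar>P x\<bar> \<le> 1) \<and> (\<forall>x \<in> cbox (- (R *\<^sub>R One)) (R *\<^sub>R One).
    \<bar>(\<Prod>b\<in>Basis. h b (x \<bullet> b)) - P x\<bar> \<le> real DIM('a) * e)"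
proof -
  have "\<forall>b\<in>Basis. \<exists>p. trig_poly p \<and> (\<forall>x. \<bar>p x\<bar> \<le> 1) \<and> (\<forall>x. \<bar>x\<bar> \<le> R \<longrightarrow> \<bar>p x - h b x\<bar> \<le> e)"
  proof
    fix b :: 'a assume b: "b \<in> Basis"
    show "\<exists>p. trig_poly p \<and> (\<forall>x. \<bar>p x\<bar> \<le> 1) \<and> (\<forall>x. \<bar>x\<bar> \<le> R \<longrightarrow> \<bar>p x - h b x\<bar> \<le> e)"
      by (rule trig_poly_approx[OF cont[OF b] range[OF b] supp[OF b] assms(4-6)]) (assumption, blast)
  qed
  then obtain p where p: "\<And>b. b \<in> Basis \<Longrightarrow> trig_poly (p b)" "\<And>b x. b \<in> Basis \<Longrightarrow> \<bar>p b x\<bar> \<le> 1"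
      "\<And>b x. b \<in> Basis \<Longrightarrow> \<bar>x\<bar> \<le> R \<Longrightarrow> \<bar>p b x - h b x\<bar> \<le> e"
    by metis
  define P where "P x = (\<Prod>b\<in>Basis. p b (x \<bullet> b))" for x :: 'a
  have "trig_poly P"
    unfolding P_def[abs_def] by (intro trig_poly_prod trig_poly_compose_inner p) simp
  moreover have "\<bar>P x\<bar> \<le> 1" for x
    unfolding P_def abs_prod using p by (intro prod_le_1) auto
  moreover have "\<bar>(\<Prod>b\<in>Basis. h b (x \<bullet> b)) - P x\<bar> \<le> real DIM('a) * e"
    if "x \<in> cbox (- (R *\<^sub>R One)) (R *\<^sub>R One)" for x
  proof -
    have "\<bar>(\<Prod>b\<in>Basis. h b (x \<bullet> b)) - P x\<bar> \<le> (\<Sum>b\<in>Basis. norm (h b (x \<bullet> b) - p b (x \<bullet> b)))"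
      unfolding P_def real_norm_def[symmetric]
      by (rule norm_prod_diff) (use range p in auto)
    also have "\<dots> \<le> real DIM('a) * e"
    proof (rule sum_bounded_above)
      fix b :: 'a assume "b \<in> Basis"
      with that have "\<bar>x \<bullet> b\<bar> \<le> R" by (auto simp: mem_box abs_le_iff)
      then show "norm (h b (x \<bullet> b) - p b (x \<bullet> b)) \<le> e"
        using p(3)[OF \<open>b \<in> Basis\<close>] by (simp add: abs_minus_commute)
    qed
    finally show ?thesis .
  qed
  ultimately show ?thesis by blast
qed

lemma integral_coordinate_product_eq:
  fixes M N :: "'a::euclidean_space measure" and h :: "'a \<Rightarrow> real \<Rightarrow> real"
  assumes M: "finite_measure M" "sets M = sets borel" and N: "finite_measure N" "sets N = sets borel"
    and char: "\<And>t. (\<integral>x. iexp (t \<bullet> x) \<partial>M) = (\<integral>x. iexp (t \<bullet> x) \<partial>N)"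
    and cont: "\<And>b. b \<in> Basis \<Longrightarrow> continuous_on UNIV (h b)"
    and range: "\<And>b x. b \<in> Basis \<Longrightarrow> 0 \<le> h b x \<and> h b x \<le> 1"
    and supp: "\<And>b x. b \<in> Basis \<Longrightarrow> L \<le> \<bar>x\<bar> \<Longrightarrow> h b x = 0" and "0 < L"
  shows "(\<integral>x. (\<Prod>b\<in>Basis. h b (x \<bullet> b)) \<partial>M) = (\<integral>x. (\<Prod>b\<in>Basis. h b (x \<bullet> b)) \<partial>N)"
proof -
  define f where "f x = (\<Prod>b\<in>Basis. h b (x \<bullet> b))" for x :: 'a
  define C where "C = real DIM('a) * (measure M UNIV + measure N UNIV) + 4"
  have "0 < C" unfolding C_def by (simp add: add_nonneg_pos)
  have cont_f: "continuous_on UNIV f"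
    unfolding f_def[abs_def]
    by (intro continuous_on_prod continuous_on_compose2[OF cont] continuous_intros) auto
  have bounded_f: "\<bar>f x\<bar> \<le> 1" for x
    unfolding f_def abs_prod using range by (intro prod_le_1) auto
  have "\<bar>(\<integral>x. f x \<partial>M) - (\<integral>x. f x \<partial>N)\<bar> \<le> e * C" if e: "0 < e" for e
  proof -
    obtain R where "L < R" and tail_M: "measure M (- cbox (- (R *\<^sub>R One)) (R *\<^sub>R One)) < e"
      and tail_N: "measure N (- cbox (- (R *\<^sub>R One)) (R *\<^sub>R One)) < e"
      using ex_cbox_compl_measure_less[OF M N e, of L] by blast
    define K :: "'a set" where "K = cbox (- (R *\<^sub>R One)) (R *\<^sub>R One)"
    have "closed K" unfolding K_def by (rule closed_cbox)
    obtain P where "trig_poly P" and bounded_P: "\<And>x. \<bar>P x\<bar> \<le> 1"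
      and close: "\<And>x. x \<in> K \<Longrightarrow> \<bar>f x - P x\<bar> \<le> real DIM('a) * e"
      using trig_poly_coordinate_product_approx[of h L R e, OF cont range supp \<open>0 < L\<close> \<open>L < R\<close> e]
      unfolding f_def[symmetric] K_def[symmetric] by blast
    have "continuous_on UNIV P" by (rule trig_poly_continuous[OF \<open>trig_poly P\<close>])
    moreover have "(\<integral>x. P x \<partial>M) = (\<integral>x. P x \<partial>N)"
      by (rule integral_trig_poly_eq[OF M N char \<open>trig_poly P\<close>])
    ultimately have "\<bar>(\<integral>x. f x \<partial>M) - (\<integral>x. f x \<partial>N)\<bar> \<le> real DIM('a) * e * measure M UNIV + 2 * measure M (- K)
        + (real DIM('a) * e * measure N UNIV + 2 * measure N (- K))"
      using abs_integral_diff_le_split[OF M cont_f _ bounded_f bounded_P \<open>closed K\<close> close]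
        abs_integral_diff_le_split[OF N cont_f _ bounded_f bounded_P \<open>closed K\<close> close] e
      by simp
    also have "\<dots> \<le> e * C"
      using tail_M tail_N unfolding C_def K_def by (simp add: algebra_simps)
    finally show ?thesis .
  qed
  note bound = this
  have "\<bar>(\<integral>x. f x \<partial>M) - (\<integral>x. f x \<partial>N)\<bar> \<le> e" if "0 < e" for e
    using bound[of "e / C"] \<open>0 < C\<close> that by simp
  then show ?thesis
    unfolding f_def[symmetric] using dense_eq0_I[of "(\<integral>x. f x \<partial>M) - (\<integral>x. f x \<partial>N)"] by simp
qed

definition trapezoid :: "nat \<Rightarrow> real \<Rightarrow> real \<Rightarrow> real \<Rightarrow> real" where
  "trapezoid k lo hi y = min 1 (real k * max 0 (min (y - lo) (hi - y)))"

lemma trapezoid_continuous: "continuous_on UNIV (trapezoid k lo hi)"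
  unfolding trapezoid_def[abs_def] by (intro continuous_intros)

lemma trapezoid_range: "0 \<le> trapezoid k lo hi y \<and> trapezoid k lo hi y \<le> 1"
  unfolding trapezoid_def by auto

lemma trapezoid_eq_0: "y \<le> lo \<or> hi \<le> y \<Longrightarrow> trapezoid k lo hi y = 0"
  unfolding trapezoid_def by auto

lemma trapezoid_tendsto_indicator: "(\<lambda>k. trapezoid k lo hi y) \<longlonglongrightarrow> indicator {lo<..<hi} y"
proof (cases "lo < y \<and> y < hi")
  case True
  define m where "m = min (y - lo) (hi - y)"
  have m: "0 < m" unfolding m_def using True by simp
  obtain K :: nat where K: "1 / m < real K" using reals_Archimedean2 by blast
  have "trapezoid k lo hi y = 1" if "k \<ge> K" for k
  proof -
    have "1 / m < real k" using K that by (meson less_le_trans of_nat_mono)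
    then have "1 \<le> real k * m" using m by (simp add: divide_less_eq mult.commute)
    then show ?thesis unfolding trapezoid_def m_def[symmetric] using m by simp
  qed
  then have "eventually (\<lambda>k. trapezoid k lo hi y = 1) sequentially"
    unfolding eventually_sequentially by blast
  then have "(\<lambda>k. trapezoid k lo hi y) \<longlonglongrightarrow> 1" by (rule tendsto_eventually)
  then show ?thesis using True by simp
next
  case False
  then have "trapezoid k lo hi y = 0" for k by (intro trapezoid_eq_0) auto
  then show ?thesis using False by simp
qed

lemma indicator_box_prod:
  fixes a u x :: "'a::euclidean_space"
  shows "(indicator (box a u) x :: real) = (\<Prod>b\<in>Basis. indicator {a \<bullet> b<..<u \<bullet> b} (x \<bullet> b))"
proof (cases "x \<in> box a u")
  case True then show ?thesis by (simp add: mem_box)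
next
  case False
  then obtain b where b: "b \<in> Basis" "\<not> (a \<bullet> b < x \<bullet> b \<and> x \<bullet> b < u \<bullet> b)" by (auto simp: mem_box)
  then have "(\<Prod>b\<in>Basis. indicator {a \<bullet> b<..<u \<bullet> b} (x \<bullet> b) :: real) = 0"
    by (intro prod_zero[OF finite_Basis] bexI[of _ b]) auto
  then show ?thesis using False by simp
qed

lemma tendsto_integral_trapezoid_box:
  fixes K :: "'a::euclidean_space measure"
  assumes "finite_measure K" and sets: "sets K = sets borel"
  shows "(\<lambda>k. \<integral>x. (\<Prod>b\<in>Basis. trapezoid k (a \<bullet> b) (u \<bullet> b) (x \<bullet> b)) \<partial>K) \<longlonglongrightarrow> measure K (box a u)"
proof -
  interpret finite_measure K by fact
  define s where "s k x = (\<Prod>b\<in>Basis. trapezoid k (a \<bullet> b) (u \<bullet> b) (x \<bullet> b))" for k x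
  have box: "box a u \<in> sets K" using sets by simp
  have "(\<lambda>k. \<integral>x. s k x \<partial>K) \<longlonglongrightarrow> (\<integral>x. indicator (box a u) x \<partial>K)"
  proof (rule integral_dominated_convergence[where w="\<lambda>_. 1"])
    show "(indicator (box a u) :: 'a \<Rightarrow> real) \<in> borel_measurable K" using box by simp
    show "s k \<in> borel_measurable K" for k
      unfolding measurable_cong_sets[OF sets refl] s_def[abs_def]
      by (intro borel_measurable_continuous_onI continuous_on_prod
          continuous_on_compose2[OF trapezoid_continuous] continuous_intros) auto
    show "AE x in K. (\<lambda>k. s k x) \<longlonglongrightarrow> indicator (box a u) x"
      unfolding s_def indicator_box_prod by (intro AE_I2 tendsto_prod trapezoid_tendsto_indicator)
    show "AE x in K. norm (s k x) \<le> 1" for k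
      unfolding s_def real_norm_def abs_prod using trapezoid_range by (intro AE_I2 prod_le_1) auto
  qed simp
  then show ?thesis using box unfolding s_def by (simp add: emeasure_eq_measure)
qed

lemma measure_box_eq_char:
  fixes M N :: "'a::euclidean_space measure"
  assumes M: "finite_measure M" "sets M = sets borel" and N: "finite_measure N" "sets N = sets borel"
    and char: "\<And>t. (\<integral>x. iexp (t \<bullet> x) \<partial>M) = (\<integral>x. iexp (t \<bullet> x) \<partial>N)"
  shows "measure M (box a u) = measure N (box a u)"
proof -
  define L where "L = 1 + norm a + norm u"
  have "0 < L" unfolding L_def by (simp add: add_pos_nonneg)
  have "trapezoid k (a \<bullet> b) (u \<bullet> b) y = 0" if "b \<in> Basis" "L \<le> \<bar>y\<bar>" for k b y
  proof (rule trapezoid_eq_0)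
    have "\<bar>a \<bullet> b\<bar> \<le> norm a" "\<bar>u \<bullet> b\<bar> \<le> norm u" using Basis_le_norm that(1) by auto
    then show "y \<le> a \<bullet> b \<or> u \<bullet> b \<le> y" using that(2) unfolding L_def by (auto simp: abs_le_iff)
  qed
  then have "(\<integral>x. (\<Prod>b\<in>Basis. trapezoid k (a \<bullet> b) (u \<bullet> b) (x \<bullet> b)) \<partial>M)
      = (\<integral>x. (\<Prod>b\<in>Basis. trapezoid k (a \<bullet> b) (u \<bullet> b) (x \<bullet> b)) \<partial>N)" for k
    by (intro integral_coordinate_product_eq[OF M N char trapezoid_continuous trapezoid_range _ \<open>0 < L\<close>])
  note eq = this
  show ?thesis
    using tendsto_integral_trapezoid_box[OF M, of a u] tendsto_integral_trapezoid_box[OF N, of a u]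
    unfolding eq by (rule LIMSEQ_unique)
qed

lemma measure_eqI_char:
  fixes M N :: "'a::euclidean_space measure"
  assumes fM: "finite_measure M" and sM: "sets M = sets borel"
    and fN: "finite_measure N" and sN: "sets N = sets borel"
    and char: "\<And>t. (\<integral>x. iexp (t \<bullet> x) \<partial>M) = (\<integral>x. iexp (t \<bullet> x) \<partial>N)"
  shows "M = N"
proof (rule measure_eqI_generator_eq)
  let ?E = "range (\<lambda>(a, b). box a b::'a set)"
  show "Int_stable ?E"
    by (auto simp: Int_stable_def box_Int_box)
  show "?E \<subseteq> Pow UNIV" "sets M = sigma_sets UNIV ?E" "sets N = sigma_sets UNIV ?E"
    by (simp_all add: borel_eq_box sM sN)
  let ?A = "\<lambda>n::nat. box (- (real n *\<^sub>R One)) (real n *\<^sub>R One) :: 'a set"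
  show "range ?A \<subseteq> ?E" "(\<Union>i. ?A i) = UNIV"
    unfolding UN_box_eq_UNIV by auto
  show "emeasure M (?A i) \<noteq> \<infinity>" for i
    using finite_measure.emeasure_finite[OF fM] by simp
  show "emeasure M X = emeasure N X" if "X \<in> ?E" for X
  proof -
    obtain a u where X: "X = box a u" using \<open>X \<in> ?E\<close> by auto
    have "measure M X = measure N X" unfolding X by (rule measure_box_eq_char[OF fM sM fN sN char])
    moreover have "X \<in> sets M" "X \<in> sets N" using X sM sN by auto
    ultimately show ?thesis
      using finite_measure.emeasure_eq_measure[OF fM] finite_measure.emeasure_eq_measure[OF fN] by simp
  qed
qed

section \<open>The standard Gaussian measure on a Euclidean space\<close>

lemma integral_std_normal_density_iexp:
  "(\<integral>x. complex_of_real (std_normal_density x) * iexp (s * x) \<partial>lborel) = exp (- s\<^sup>2 / 2)"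
proof -
  have "(\<integral>x. complex_of_real (std_normal_density x) * iexp (s * x) \<partial>lborel)
      = (\<integral>x. std_normal_density x *\<^sub>R iexp (s * x) \<partial>lborel)"
    by (simp add: scaleR_conv_of_real)
  also have "\<dots> = char std_normal_distribution s"
    unfolding char_def by (subst integral_density) auto
  also have "\<dots> = exp (- s\<^sup>2 / 2)" by (simp add: char_std_normal_distribution)
  finally show ?thesis .
qed

lemma integrable_std_normal_density_iexp:
  "integrable lborel (\<lambda>x. complex_of_real (std_normal_density x) * iexp (s * x))"
proof -
  interpret real_distribution std_normal_distribution by (rule real_dist_normal_dist)
  have "integrable std_normal_distribution (\<lambda>x. iexp (s * x))"
    by (rule integrable_const_bound[where B=1]) auto
  then have "integrable lborel (\<lambda>x. std_normal_density x *\<^sub>R iexp (s * x))"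
    by (subst (asm) integrable_density) auto
  then show ?thesis by (simp add: scaleR_conv_of_real)
qed

definition std_gaussian :: "'a::euclidean_space measure" where
  "std_gaussian = density lborel (\<lambda>z. ennreal (\<Prod>b\<in>Basis. std_normal_density (z \<bullet> b)))"

lemma sets_std_gaussian[simp]: "sets std_gaussian = sets borel"
  unfolding std_gaussian_def by simp

lemma prob_space_std_gaussian: "prob_space (std_gaussian :: 'a::euclidean_space measure)"
proof
  have one: "(\<integral>\<^sup>+x. ennreal (std_normal_density x) \<partial>lborel) = 1"
  proof -
    interpret prob_space std_normal_distribution by (rule prob_space_normal_density) simp
    have "emeasure std_normal_distribution UNIV = 1" using emeasure_space_1 by simp
    then show ?thesis by (simp add: emeasure_density)
  qed
  have "emeasure (std_gaussian :: 'a measure) UNIV = (\<integral>\<^sup>+(z::'a). ennreal (\<Prod>b\<in>Basis. std_normal_density (z \<bullet> b)) \<partial>lborel)"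
    unfolding std_gaussian_def by (simp add: emeasure_density)
  also have "\<dots> = (\<integral>\<^sup>+(z::'a). (\<Prod>b\<in>Basis. ennreal (std_normal_density (z \<bullet> b))) \<partial>lborel)"
    by (simp add: prod_ennreal)
  also have "\<dots> = (\<Prod>b\<in>(Basis::'a set). (\<integral>\<^sup>+x. ennreal (std_normal_density x) \<partial>lborel))"
    by (rule nn_integral_lborel_prod) auto
  also have "\<dots> = 1" by (simp add: one)
  finally have "emeasure (std_gaussian :: 'a measure) UNIV = 1" .
  moreover have "space (std_gaussian :: 'a measure) = UNIV" by (simp add: std_gaussian_def)
  ultimately show "emeasure (std_gaussian :: 'a measure) (space std_gaussian) = 1" by simp
qed

lemma integral_lborel_coordinate_prod:
  fixes G :: "'a::euclidean_space \<Rightarrow> real \<Rightarrow> 'b::{real_normed_field, banach, second_countable_topology}"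
  assumes "\<And>b. b \<in> Basis \<Longrightarrow> integrable lborel (G b)"
  shows "(\<integral>z. (\<Prod>b\<in>Basis. G b (z \<bullet> b)) \<partial>lborel) = (\<Prod>b\<in>Basis. \<integral>x. G b x \<partial>lborel)"
proof -
  interpret P: product_sigma_finite "\<lambda>_::'a. lborel :: real measure"
    by (simp add: product_sigma_finite_def lborel.sigma_finite_measure_axioms)
  define \<Phi> where "\<Phi> f = (\<Sum>b\<in>Basis. f b *\<^sub>R b)" for f :: "'a \<Rightarrow> real"
  have "\<Phi> f \<bullet> b = f b" if "b \<in> Basis" for f b
    unfolding \<Phi>_def using that by (simp add: inner_sum_left inner_Basis if_distrib cong: if_cong)
  moreover have "\<Phi> \<in> measurable (\<Pi>\<^sub>M b\<in>Basis. lborel) borel" unfolding \<Phi>_def[abs_def] by measurable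
  moreover have "(\<lambda>z. G b (z \<bullet> b)) \<in> borel_measurable borel" if "b \<in> Basis" for b
    using borel_measurable_integrable[OF assms[OF that]]
    by (intro measurable_compose[of "\<lambda>z. z \<bullet> b" _ borel "G b"]) auto
  then have "(\<lambda>z. \<Prod>b\<in>Basis. G b (z \<bullet> b)) \<in> borel_measurable borel"
    by (rule borel_measurable_prod)
  ultimately have "(\<integral>z. (\<Prod>b\<in>Basis. G b (z \<bullet> b)) \<partial>distr (\<Pi>\<^sub>M b\<in>Basis. lborel) borel \<Phi>)
      = (\<integral>f. (\<Prod>b\<in>Basis. G b (f b)) \<partial>(\<Pi>\<^sub>M b\<in>Basis. lborel))"
    by (subst integral_distr) (auto intro!: Bochner_Integration.integral_cong prod.cong)
  also have "\<dots> = (\<Prod>b\<in>Basis. \<integral>x. G b x \<partial>lborel)"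
    by (rule P.product_integral_prod) (simp_all add: assms)
  finally show ?thesis
    unfolding \<Phi>_def[abs_def] by (simp flip: lborel_eq)
qed

lemma char_std_gaussian:
  fixes t :: "'a::euclidean_space"
  shows "(\<integral>z. iexp (t \<bullet> z) \<partial>std_gaussian) = exp (- (norm t)\<^sup>2 / 2)"
proof -
  define G where "G b x = complex_of_real (std_normal_density x) * iexp ((t \<bullet> b) * x)" for b x
  have "(\<integral>z. iexp (t \<bullet> z) \<partial>std_gaussian)
      = (\<integral>z. (\<Prod>b\<in>Basis. std_normal_density (z \<bullet> b)) *\<^sub>R iexp (t \<bullet> z) \<partial>lborel)"
    unfolding std_gaussian_def by (subst integral_density) (auto simp: prod_nonneg)
  also have "\<dots> = (\<integral>z. (\<Prod>b\<in>Basis. G b (z \<bullet> b)) \<partial>lborel)"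
  proof (rule Bochner_Integration.integral_cong[OF refl])
    fix z :: 'a
    have "iexp (t \<bullet> z) = (\<Prod>b\<in>Basis. iexp ((t \<bullet> b) * (z \<bullet> b)))"
      by (subst euclidean_inner) (simp add: sum_distrib_left exp_sum)
    then show "(\<Prod>b\<in>Basis. std_normal_density (z \<bullet> b)) *\<^sub>R iexp (t \<bullet> z) = (\<Prod>b\<in>Basis. G b (z \<bullet> b))"
      unfolding G_def by (simp add: scaleR_conv_of_real prod.distrib)
  qed
  also have "\<dots> = (\<Prod>b\<in>Basis. \<integral>x. G b x \<partial>lborel)"
    unfolding G_def by (rule integral_lborel_coordinate_prod, rule integrable_std_normal_density_iexp)
  also have "\<dots> = (\<Prod>b\<in>Basis. complex_of_real (exp (- (t \<bullet> b)\<^sup>2 / 2)))"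
    unfolding G_def by (simp only: integral_std_normal_density_iexp)
  also have "\<dots> = exp (- (norm t)\<^sup>2 / 2)"
  proof -
    have "(norm t)\<^sup>2 = (\<Sum>b\<in>Basis. (t \<bullet> b) * (t \<bullet> b))"
      unfolding power2_norm_eq_inner by (rule euclidean_inner)
    then have "exp (- (norm t)\<^sup>2 / 2) = (\<Prod>b\<in>Basis. exp (- (t \<bullet> b)\<^sup>2 / 2))"
      by (simp add: power2_eq_square exp_sum[symmetric] sum_divide_distrib sum_negf)
    then show ?thesis by simp
  qed
  finally show ?thesis .
qed

lemma null_sets_lborel_vimage_linear:
  fixes T :: "'a::euclidean_space \<Rightarrow> 'a"
  assumes "linear T" "inj T" and N: "N \<in> null_sets lborel"
  shows "T -` N \<in> null_sets lborel"
proof -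
  obtain T' where "linear T'" and T'T: "\<And>x. T' (T x) = x" and TT': "\<And>x. T (T' x) = x"
    using linear_injective_isomorphism[OF assms(1,2)] by blast
  have "T -` N = T' ` N"
  proof
    show "T -` N \<subseteq> T' ` N" using T'T by (metis image_eqI subsetI vimageE)
    show "T' ` N \<subseteq> T -` N" using TT' by auto
  qed
  moreover have "negligible N"
    using N by (simp add: negligible_iff_null_sets null_sets_completionI)
  then have "negligible (T' ` N)"
    by (rule negligible_differentiable_image_negligible[OF order_refl])
      (rule linear_imp_differentiable_on[OF \<open>linear T'\<close>])
  ultimately have "T -` N \<in> null_sets lebesgue"
    by (simp add: negligible_iff_null_sets)
  moreover have "T \<in> borel_measurable borel"
    using assms(1) by (intro borel_measurable_continuous_onI linear_continuous_on)
      (simp add: linear_conv_bounded_linear)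
  then have "T -` N \<in> sets borel"
    using measurable_sets[of T borel borel N] N by (simp add: null_sets_def)
  ultimately show ?thesis
    using null_sets_completion_iff[of "T -` N" lborel] by simp
qed

lemma absolutely_continuous_distr_linear:
  fixes T :: "'a::euclidean_space \<Rightarrow> 'a"
  assumes "absolutely_continuous lborel \<mu>" "sets \<mu> = sets borel" "linear T" "inj T"
  shows "absolutely_continuous lborel (distr \<mu> borel T)"
  unfolding absolutely_continuous_def
proof
  fix N :: "'a set" assume N: "N \<in> null_sets lborel"
  have T: "T \<in> measurable \<mu> borel"
    unfolding measurable_cong_sets[OF assms(2) refl] using assms(3)
    by (intro borel_measurable_continuous_onI linear_continuous_on) (simp add: linear_conv_bounded_linear)
  have "T -` N \<in> null_sets \<mu>"
    using assms(1) null_sets_lborel_vimage_linear[OF assms(3,4) N] by (auto simp: absolutely_continuous_def)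
  moreover have "N \<in> sets borel" using N by (simp add: null_sets_def)
  ultimately show "N \<in> null_sets (distr \<mu> borel T)"
    using sets_eq_imp_space_eq[OF assms(2)] by (simp add: null_sets_def emeasure_distr[OF T])
qed

text \<open>A finite measure with the characteristic function of the centred Gaussian law with
  covariance \<open>A\<^sup>T A\<close> is the image of the standard Gaussian measure under \<open>A\<^sup>T\<close>.\<close>

lemma absolutely_continuous_char_gaussian:
  fixes \<mu> :: "'a::euclidean_space measure" and A :: "'a \<Rightarrow> 'a"
  assumes "finite_measure \<mu>" "sets \<mu> = sets borel" "linear A" "inj A"
    and char: "\<And>t. (\<integral>x. iexp (t \<bullet> x) \<partial>\<mu>) = exp (- (norm (A t))\<^sup>2 / 2)"
  shows "absolutely_continuous lborel \<mu>"
proof -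
  define T where "T = adjoint A"
  have "linear T" unfolding T_def by (rule adjoint_linear[OF assms(3)])
  have "inj T"
    unfolding T_def using assms(3) linear_injective_imp_surjective[OF assms(3,4)] by simp
  have T: "T \<in> measurable std_gaussian borel"
    using \<open>linear T\<close> by (auto intro!: borel_measurable_continuous_onI linear_continuous_on
        simp: linear_conv_bounded_linear measurable_cong_sets[OF sets_std_gaussian refl])
  have "(\<integral>x. iexp (t \<bullet> x) \<partial>distr std_gaussian borel T) = exp (- (norm (A t))\<^sup>2 / 2)" for t
  proof -
    have "(\<integral>x. iexp (t \<bullet> x) \<partial>distr std_gaussian borel T) = (\<integral>z. iexp (t \<bullet> T z) \<partial>std_gaussian)"
      by (rule integral_distr[OF T]) simp
    also have "\<dots> = (\<integral>z. iexp (A t \<bullet> z) \<partial>std_gaussian)"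
      unfolding T_def adjoint_works[OF assms(3)] ..
    finally show ?thesis by (simp add: char_std_gaussian)
  qed
  then have "\<mu> = distr std_gaussian borel T"
    using prob_space.finite_measure[OF prob_space.prob_space_distr[OF prob_space_std_gaussian T]]
    by (intro measure_eqI_char assms(1,2)) (simp_all add: char)
  moreover have "absolutely_continuous lborel (std_gaussian :: 'a measure)"
    unfolding std_gaussian_def by (intro absolutely_continuousI_density) measurable
  ultimately show ?thesis
    using absolutely_continuous_distr_linear[OF _ sets_std_gaussian \<open>linear T\<close> \<open>inj T\<close>] by simp
qed

section \<open>Cholesky factorisation of positive definite quadratic forms\<close>

definition quad_form :: "nat \<Rightarrow> (nat \<Rightarrow> nat \<Rightarrow> real) \<Rightarrow> (nat \<Rightarrow> real) \<Rightarrow> real" where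
  "quad_form n g c = (\<Sum>i<n. \<Sum>j<n. c i * c j * g i j)"

lemma quad_form_Suc:
  assumes sym: "\<And>i j. g i j = g j i"
  shows "quad_form (Suc n) g c = quad_form n g c + 2 * c n * (\<Sum>i<n. c i * g i n) + c n * c n * g n n"
proof -
  have "quad_form (Suc n) g c = (\<Sum>i<n. (\<Sum>j<n. c i * c j * g i j) + c i * c n * g i n)
          + ((\<Sum>j<n. c n * c j * g n j) + c n * c n * g n n)"
    unfolding quad_form_def by simp
  also have "\<dots> = quad_form n g c + (\<Sum>i<n. c i * c n * g i n) + (\<Sum>j<n. c n * c j * g n j) + c n * c n * g n n"
    unfolding quad_form_def by (simp add: sum.distrib)
  also have "(\<Sum>j<n. c n * c j * g n j) = (\<Sum>i<n. c i * c n * g i n)"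
    using sym by (intro sum.cong) (auto simp: mult.commute)
  also have "(\<Sum>i<n. c i * c n * g i n) = c n * (\<Sum>i<n. c i * g i n)"
    by (simp add: sum_distrib_left mult_ac)
  finally show ?thesis by simp
qed

lemma quad_form_cong:
  assumes "\<And>i. i < n \<Longrightarrow> c i = c' i"
  shows "quad_form n g c = quad_form n g c'"
  unfolding quad_form_def using assms by (intro sum.cong refl) auto

lemma quad_form_schur_complement:
  assumes sym: "\<And>i j. g i j = g j i"
  shows "quad_form n (\<lambda>i j. g i j - g i n * g n j / p) c = quad_form n g c - (\<Sum>i<n. c i * g i n)\<^sup>2 / p"
proof -
  have "quad_form n (\<lambda>i j. g i j - g i n * g n j / p) c
      = quad_form n g c - (\<Sum>i<n. \<Sum>j<n. (c i * g i n) * (c j * g j n) / p)"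
    unfolding quad_form_def by (simp add: sum_subtractf right_diff_distrib sym[of n] mult_ac)
  also have "(\<Sum>i<n. \<Sum>j<n. (c i * g i n) * (c j * g j n) / p) = (\<Sum>i<n. c i * g i n)\<^sup>2 / p"
    by (simp add: power2_eq_square sum_product sum_divide_distrib)
  finally show ?thesis .
qed

lemma quad_form_Suc_complete_square:
  assumes sym: "\<And>i j. g i j = g j i" and p: "g n n \<noteq> 0"
  shows "quad_form (Suc n) g c = g n n * (c n + (\<Sum>i<n. c i * g i n) / g n n)\<^sup>2
    + quad_form n (\<lambda>i j. g i j - g i n * g n j / g n n) c"
proof -
  define s where "s = (\<Sum>i<n. c i * g i n)"
  have "g n n * (c n + s / g n n)\<^sup>2 = g n n * (c n)\<^sup>2 + 2 * c n * s + s\<^sup>2 / g n n"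
    using p by (simp add: field_simps power2_eq_square)
  then show ?thesis
    using quad_form_Suc[of g n c, OF sym] quad_form_schur_complement[of g n "g n n" c, OF sym]
    unfolding s_def by (simp add: power2_eq_square)
qed

lemma sum_squares_add_square:
  fixes L' :: "nat \<Rightarrow> nat \<Rightarrow> real"
  assumes p: "0 < p"
  shows "\<exists>L. \<forall>c. p * (c n + (\<Sum>k<n. c k * a k) / p)\<^sup>2 + (\<Sum>i<n. (\<Sum>k<n. L' i k * c k)\<^sup>2)
    = (\<Sum>i<Suc n. (\<Sum>k<Suc n. L i k * c k)\<^sup>2)"
proof -
  define L where "L i k = (if i < n then (if k < n then L' i k else 0)
      else (if k < n then a k / sqrt p else sqrt p))" for i k
  have "(\<Sum>k<Suc n. L n k * c k) = sqrt p * (c n + (\<Sum>k<n. c k * a k) / p)" for c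
  proof -
    have "(\<Sum>k<Suc n. L n k * c k) = (\<Sum>k<n. a k / sqrt p * c k) + sqrt p * c n"
      unfolding L_def by simp
    also have "(\<Sum>k<n. a k / sqrt p * c k) = (\<Sum>k<n. c k * a k) / sqrt p"
      by (simp add: sum_divide_distrib mult_ac)
    also have "\<dots> = sqrt p * ((\<Sum>k<n. c k * a k) / p)"
      using p by (simp add: field_simps)
    finally show ?thesis by (simp add: algebra_simps)
  qed
  then have "(\<Sum>i<Suc n. (\<Sum>k<Suc n. L i k * c k)\<^sup>2)
      = p * (c n + (\<Sum>k<n. c k * a k) / p)\<^sup>2 + (\<Sum>i<n. (\<Sum>k<n. L' i k * c k)\<^sup>2)" for c
    using p by (simp add: L_def power_mult_distrib)
  then show ?thesis by metis
qed

lemma quad_form_cholesky: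
  fixes g :: "nat \<Rightarrow> nat \<Rightarrow> real"
  assumes "\<And>i j. g i j = g j i"
    and "\<And>c. (\<exists>k<n. c k \<noteq> 0) \<Longrightarrow> 0 < quad_form n g c"
  shows "\<exists>L. \<forall>c. quad_form n g c = (\<Sum>i<n. (\<Sum>k<n. L i k * c k)\<^sup>2)"
  using assms
proof (induction n arbitrary: g)
  case 0
  then show ?case by (simp add: quad_form_def)
next
  case (Suc n)
  note sym = Suc.prems(1) and pd = Suc.prems(2)
  define p where "p = g n n"
  have p: "0 < p"
    using pd[of "\<lambda>k. if k = n then 1 else 0"] quad_form_Suc[of g n "\<lambda>k. if k = n then 1 else 0", OF sym]
    unfolding p_def by (simp add: quad_form_def)
  define g' where "g' i j = g i j - g i n * g n j / p" for i j
  define s where "s c = (\<Sum>i<n. c i * g i n)" for c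
  have decomp: "quad_form (Suc n) g c = p * (c n + s c / p)\<^sup>2 + quad_form n g' c" for c
    unfolding p_def g'_def s_def using p p_def by (intro quad_form_Suc_complete_square sym) simp
  have pd': "0 < quad_form n g' c" if "\<exists>k<n. c k \<noteq> 0" for c
  proof -
    \<comment> \<open>Choosing the last coordinate to kill the square leaves exactly the Schur complement.\<close>
    define c' where "c' = c(n := - s c / p)"
    have "s c' = s c" unfolding s_def c'_def by (intro sum.cong) auto
    have "0 < quad_form (Suc n) g c'" using that by (intro pd) (auto simp: c'_def)
    also have "\<dots> = quad_form n g' c'" using decomp[of c'] \<open>s c' = s c\<close> p by (simp add: c'_def)
    also have "\<dots> = quad_form n g' c" by (rule quad_form_cong) (simp add: c'_def)
    finally show ?thesis .
  qed
  have "g' i j = g' j i" for i j unfolding g'_def using sym by (simp add: mult.commute)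
  then obtain L' where L': "\<And>c. quad_form n g' c = (\<Sum>i<n. (\<Sum>k<n. L' i k * c k)\<^sup>2)"
    using Suc.IH pd' by blast
  show ?case
    using sum_squares_add_square[OF p, where n=n and L'=L' and a="\<lambda>k. g k n"]
    unfolding decomp L' s_def .
qed

section \<open>Derivatives of a test function and their Gram matrix\<close>

lemma has_real_derivative_funpow_deriv:
  assumes "smooth_fun f"
  shows "((deriv ^^ k) f has_real_derivative (deriv ^^ Suc k) f x) (at x)"
proof -
  have "(deriv ^^ k) f differentiable (at x)" using assms unfolding smooth_fun_def by blast
  then show ?thesis by (simp add: DERIV_deriv_iff_real_differentiable)
qed

lemma continuous_on_funpow_deriv:
  assumes "smooth_fun f"
  shows "continuous_on UNIV ((deriv ^^ k) f)"
  using has_real_derivative_funpow_deriv[OF assms, THEN DERIV_isCont]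
  by (simp add: continuous_at_imp_continuous_on)

lemma funpow_deriv_eq_0_outside:
  fixes f :: "real \<Rightarrow> real"
  assumes "\<And>x. x \<notin> {a..b} \<Longrightarrow> f x = 0" and "x \<notin> {a..b}"
  shows "(deriv ^^ k) f x = 0"
  using assms(2)
proof (induction k arbitrary: x)
  case 0
  then show ?case using assms(1) by simp
next
  case (Suc k)
  have "\<forall>\<^sub>F y in nhds x. (deriv ^^ k) f y = 0"
    unfolding eventually_nhds using Suc by (intro exI[of _ "- {a..b}"]) auto
  then have "((deriv ^^ k) f has_real_derivative 0) (at x)"
    by (rule DERIV_cong_ev[OF refl _ refl, THEN iffD2]) simp
  then show ?case by (simp add: DERIV_imp_deriv)
qed

lemma smooth_fun_funpow_deriv: "smooth_fun f \<Longrightarrow> smooth_fun ((deriv ^^ k) f)"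
  unfolding smooth_fun_def by (metis funpow_add comp_apply)

lemma test_fun_funpow_deriv: "test_fun f \<Longrightarrow> test_fun ((deriv ^^ k) f)"
  unfolding test_fun_def using smooth_fun_funpow_deriv funpow_deriv_eq_0_outside by metis

lemma integrable_indicator_greaterThan_mult:
  fixes F :: "real \<Rightarrow> real"
  assumes "continuous_on UNIV F" "0 < a" "\<And>x. x \<notin> {a..b} \<Longrightarrow> F x = 0"
  shows "integrable lborel (\<lambda>x. indicator {0<..} x * F x)"
proof -
  have "(\<lambda>x. indicator {0<..} x * F x) = (\<lambda>x. F x * indicator {a..b} x)"
    using assms(2,3) by (auto simp: indicator_def fun_eq_iff)
  moreover have "integrable lborel (\<lambda>x. F x * indicator {a..b} x)"
    using assms(1) by (intro borel_integrable_atLeastAtMost) (simp add: continuous_on_eq_continuous_at)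
  ultimately show ?thesis by simp
qed

lemma gronwall_eq_0:
  fixes E E' :: "real \<Rightarrow> real"
  assumes deriv: "\<And>y. (E has_real_derivative E' y) (at y)" and le: "\<And>y. E' y \<le> K * E y"
    and nonneg: "\<And>y. 0 \<le> E y" and left: "\<And>y. y < a \<Longrightarrow> E y = 0"
  shows "E x = 0"
proof -
  define h where "h y = exp (- K * y) * E y" for y
  have "h x \<le> h (min x (a - 1))"
  proof (rule DERIV_nonpos_imp_nonincreasing[of "min x (a - 1)" x h])
    fix y
    have "((\<lambda>y. exp (- K * y)) has_real_derivative exp (- K * y) * (- K)) (at y)"
      by (auto intro!: derivative_eq_intros)
    from DERIV_mult[OF this deriv[of y]]
    have "(h has_real_derivative exp (- K * y) * (E' y - K * E y)) (at y)"
      unfolding h_def[abs_def] by (simp add: algebra_simps)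
    moreover have "exp (- K * y) * (E' y - K * E y) \<le> 0"
      using le[of y] by (simp add: mult_nonneg_nonpos)
    ultimately show "\<exists>D. (h has_real_derivative D) (at y) \<and> D \<le> 0" by (intro exI conjI)
  qed simp
  moreover have "E (min x (a - 1)) = 0" using left by simp
  ultimately have "E x \<le> 0" unfolding h_def by (simp add: mult_le_0_iff)
  then show ?thesis using nonneg[of x] by simp
qed

lemma chain_energy_bound:
  fixes v d :: "nat \<Rightarrow> real"
  assumes rel: "v m = (\<Sum>k<m. d k * v k)"
  shows "(\<Sum>k<m. 2 * v k * v (Suc k)) \<le> 2 * real m * (1 + (\<Sum>k<m. \<bar>d k\<bar>)) * (\<Sum>k<m. (v k)\<^sup>2)"
proof -
  define E where "E = (\<Sum>k<m. (v k)\<^sup>2)"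
  define B where "B = 1 + (\<Sum>k<m. \<bar>d k\<bar>)"
  have B: "1 \<le> B" unfolding B_def by (simp add: sum_nonneg)
  have E: "0 \<le> E" unfolding E_def by (simp add: sum_nonneg)
  have le_sqrt_E: "\<bar>v k\<bar> \<le> sqrt E" if "k < m" for k
  proof -
    have "(v k)\<^sup>2 \<le> E" unfolding E_def using that by (intro member_le_sum) auto
    then show ?thesis by (metis real_sqrt_abs real_sqrt_le_mono)
  qed
  have le_B_sqrt_E: "\<bar>v (Suc k)\<bar> \<le> B * sqrt E" if "k < m" for k
  proof (cases "Suc k < m")
    case True
    then have "\<bar>v (Suc k)\<bar> \<le> sqrt E" by (rule le_sqrt_E)
    also have "\<dots> \<le> B * sqrt E" using B E by (simp add: mult_le_cancel_right1)
    finally show ?thesis .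
  next
    case False
    with that have "Suc k = m" by simp
    then have "\<bar>v (Suc k)\<bar> = \<bar>\<Sum>j<m. d j * v j\<bar>" using rel by simp
    also have "\<dots> \<le> (\<Sum>j<m. \<bar>d j\<bar> * \<bar>v j\<bar>)"
      by (rule order_trans[OF sum_abs]) (simp add: abs_mult)
    also have "\<dots> \<le> (\<Sum>j<m. \<bar>d j\<bar> * sqrt E)"
      by (intro sum_mono mult_left_mono le_sqrt_E) auto
    also have "\<dots> = (B - 1) * sqrt E" unfolding B_def by (simp add: sum_distrib_right)
    also have "\<dots> \<le> B * sqrt E" using E by (simp add: algebra_simps)
    finally show ?thesis .
  qed
  have "2 * v k * v (Suc k) \<le> 2 * B * E" if "k < m" for k
  proof -
    have "2 * v k * v (Suc k) \<le> 2 * (\<bar>v k\<bar> * \<bar>v (Suc k)\<bar>)"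
      by (simp add: abs_mult[symmetric] mult.assoc)
    also have "\<dots> \<le> 2 * (sqrt E * (B * sqrt E))"
      using le_sqrt_E[OF that] le_B_sqrt_E[OF that] E B by (intro mult_left_mono mult_mono) auto
    also have "\<dots> = 2 * B * E" using E by (simp add: algebra_simps)
    finally show ?thesis .
  qed
  then have "(\<Sum>k<m. 2 * v k * v (Suc k)) \<le> (\<Sum>k<m. 2 * B * E)" by (intro sum_mono) auto
  then show ?thesis unfolding B_def E_def by (simp add: mult_ac)
qed

text \<open>Uniqueness for a linear ODE with constant coefficients, written as the chain
  \<open>\<psi>\<^sub>k' = \<psi>\<^sub>k\<^sub>+\<^sub>1\<close> closed by \<open>\<psi>\<^sub>m = \<Sum>\<^sub>k\<^sub><\<^sub>m d\<^sub>k \<psi>\<^sub>k\<close>: the energy \<open>\<Sum>\<^sub>k\<^sub><\<^sub>m \<psi>\<^sub>k\<^sup>2\<close> obeys a Gronwall inequality.\<close>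

lemma linear_ode_zero_if_zero_left:
  fixes \<psi> :: "nat \<Rightarrow> real \<Rightarrow> real" and d :: "nat \<Rightarrow> real"
  assumes der: "\<And>k x. (\<psi> k has_real_derivative \<psi> (Suc k) x) (at x)"
    and rel: "\<And>x. \<psi> m x = (\<Sum>k<m. d k * \<psi> k x)" and "0 < m"
    and left: "\<And>k x. x < a \<Longrightarrow> \<psi> k x = 0"
  shows "\<psi> 0 x = 0"
proof -
  define E where "E y = (\<Sum>k<m. (\<psi> k y)\<^sup>2)" for y
  have "(E has_real_derivative (\<Sum>k<m. 2 * \<psi> k y * \<psi> (Suc k) y)) (at y)" for y
  proof -
    have "((\<lambda>y. (\<psi> k y)\<^sup>2) has_real_derivative 2 * \<psi> k y * \<psi> (Suc k) y) (at y)" for k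
      using DERIV_power[OF der[of k y], of 2] by (simp add: mult_ac)
    then show ?thesis unfolding E_def[abs_def] by (intro DERIV_sum) auto
  qed
  moreover have "(\<Sum>k<m. 2 * \<psi> k y * \<psi> (Suc k) y) \<le> 2 * real m * (1 + (\<Sum>k<m. \<bar>d k\<bar>)) * E y" for y
    unfolding E_def by (rule chain_energy_bound) (rule rel)
  moreover have "0 \<le> E y" for y unfolding E_def by (simp add: sum_nonneg)
  moreover have "E y = 0" if "y < a" for y unfolding E_def using left[OF that] by simp
  ultimately have "E x = 0" by (rule gronwall_eq_0)
  moreover have "(\<psi> 0 x)\<^sup>2 \<le> E x" unfolding E_def using \<open>0 < m\<close> by (intro member_le_sum) auto
  ultimately show ?thesis by simp
qed

lemma funpow_deriv_linearly_independent:
  fixes c :: "nat \<Rightarrow> real"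
  assumes "test_fun f" and "\<exists>x. f x \<noteq> 0"
    and zero: "\<And>x. (\<Sum>i<n. c i * (deriv ^^ i) f x) = 0"
  shows "\<forall>i<n. c i = 0"
proof (rule ccontr)
  obtain a b where "0 < a" and supp: "\<And>x. x \<notin> {a..b} \<Longrightarrow> f x = 0" and "smooth_fun f"
    using assms(1) unfolding test_fun_def by blast
  define \<psi> where "\<psi> k = (deriv ^^ k) f" for k
  assume "\<not> (\<forall>i<n. c i = 0)"
  then have ne: "{i. i < n \<and> c i \<noteq> 0} \<noteq> {}" by auto
  \<comment> \<open>Solve the relation for its highest nonzero coefficient \<open>c\<^sub>m\<close>.\<close>
  define m where "m = Max {i. i < n \<and> c i \<noteq> 0}"
  have m: "m < n" "c m \<noteq> 0" using Max_in[OF _ ne] unfolding m_def by auto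
  have "c i = 0" if "m < i" "i < n" for i
    using Max_ge[of "{i. i < n \<and> c i \<noteq> 0}" i] that unfolding m_def[symmetric] by auto
  then have sum_m: "(\<Sum>i<Suc m. c i * \<psi> i x) = 0" for x
  proof -
    have "(\<Sum>i<n. c i * \<psi> i x) = (\<Sum>i<Suc m. c i * \<psi> i x)"
      by (rule sum.mono_neutral_right) (use m \<open>\<And>i. m < i \<Longrightarrow> i < n \<Longrightarrow> c i = 0\<close> in auto)
    then show ?thesis using zero[of x] unfolding \<psi>_def by simp
  qed
  have "f x = 0" for x
  proof (cases "m = 0")
    case True
    then show ?thesis using sum_m[of x] m(2) unfolding \<psi>_def by simp
  next
    case False
    have rel: "\<psi> m y = (\<Sum>k<m. (- c k / c m) * \<psi> k y)" for y
    proof -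
      have "(\<Sum>i<m. c i * \<psi> i y) + c m * \<psi> m y = 0" using sum_m[of y] by simp
      then have "\<psi> m y = - (\<Sum>i<m. c i * \<psi> i y) / c m" using m(2) by (simp add: field_simps)
      then show ?thesis by (simp add: sum_divide_distrib sum_negf)
    qed
    have der: "(\<psi> k has_real_derivative \<psi> (Suc k) y) (at y)" for k y
      unfolding \<psi>_def by (rule has_real_derivative_funpow_deriv[OF \<open>smooth_fun f\<close>])
    have left: "\<psi> k y = 0" if "y < a" for k y
      unfolding \<psi>_def using that by (intro funpow_deriv_eq_0_outside[OF supp]) auto
    have "\<psi> 0 x = 0"
      using False by (intro linear_ode_zero_if_zero_left[OF der rel _ left]) simp
    then show ?thesis unfolding \<psi>_def by simp
  qed
  then show False using assms(2) by simp
qed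

lemma eq_0_if_integral_square_eq_0:
  fixes F :: "real \<Rightarrow> real"
  assumes cont: "continuous_on UNIV F" and "0 < a" and supp: "\<And>x. x \<notin> {a..b} \<Longrightarrow> F x = 0"
    and zero: "(\<integral>x. indicator {0<..} x * (F x)\<^sup>2 \<partial>lborel) = 0"
  shows "F x = 0"
proof (cases "0 < x")
  case True
  have int: "integrable lborel (\<lambda>x. indicator {0<..} x * (F x)\<^sup>2)"
    using supp by (intro integrable_indicator_greaterThan_mult[OF _ \<open>0 < a\<close>, of _ b]
        continuous_intros cont) auto
  then have "AE x in lborel. indicator {0<..} x * (F x)\<^sup>2 = 0"
    using zero integral_nonneg_eq_0_iff_AE[OF int] by simp
  then have "AE x in lborel. x \<in> {0<..} \<longrightarrow> x \<in> {x. F x = 0}"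
    by eventually_elim (auto simp: indicator_def)
  then have "AE x \<in> {0<..} in lebesgue. x \<in> {x. F x = 0}" by (rule AE_completion)
  moreover have "closed {x. F x = 0}" by (rule closed_Collect_eq[OF cont continuous_on_const])
  ultimately show ?thesis
    using mem_closed_if_AE_lebesgue_open[OF open_greaterThan] True by blast
next
  case False
  then show ?thesis using supp \<open>0 < a\<close> by simp
qed

definition gram :: "(real \<Rightarrow> real) \<Rightarrow> nat \<Rightarrow> nat \<Rightarrow> real" where
  "gram f i j = (LINT x:{0<..}|lborel. (deriv ^^ i) f x * (deriv ^^ j) f x)"

lemma gram_sym: "gram f i j = gram f j i"
  unfolding gram_def by (simp add: mult.commute)

lemma quad_form_gram:
  assumes "test_fun f"
  shows "quad_form n (gram f) c = (\<integral>x. indicator {0<..} x * (\<Sum>i<n. c i * (deriv ^^ i) f x)\<^sup>2 \<partial>lborel)"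
proof -
  obtain a b where "0 < a" and supp: "\<And>x. x \<notin> {a..b} \<Longrightarrow> f x = 0" and "smooth_fun f"
    using assms unfolding test_fun_def by blast
  define \<psi> where "\<psi> k = (deriv ^^ k) f" for k
  have int: "integrable lborel (\<lambda>x. indicator {0<..} x * (\<psi> i x * \<psi> j x))" for i j
  proof (rule integrable_indicator_greaterThan_mult[OF _ \<open>0 < a\<close>])
    show "continuous_on UNIV (\<lambda>x. \<psi> i x * \<psi> j x)" unfolding \<psi>_def
      by (intro continuous_intros continuous_on_funpow_deriv[OF \<open>smooth_fun f\<close>])
    show "\<psi> i x * \<psi> j x = 0" if "x \<notin> {a..b}" for x
      unfolding \<psi>_def using funpow_deriv_eq_0_outside[OF supp that] by simp
  qed
  have pw: "indicator {0<..} x * (\<Sum>i<n. c i * \<psi> i x)\<^sup>2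
      = (\<Sum>i<n. \<Sum>j<n. c i * c j * (indicator {0<..} x * (\<psi> i x * \<psi> j x)))" for x
    by (simp add: power2_eq_square sum_product sum_distrib_left mult_ac)
  define u where "u i j x = c i * c j * (indicator {0<..} x * (\<psi> i x * \<psi> j x))" for i j x
  have i1: "integrable lborel (u i j)" for i j
    unfolding u_def[abs_def] by (intro integrable_mult_right int)
  have i2: "integrable lborel (\<lambda>x. \<Sum>j<n. u i j x)" for i
    using i1 by (auto intro!: integrable_sum)
  have "(\<integral>x. indicator {0<..} x * (\<Sum>i<n. c i * \<psi> i x)\<^sup>2 \<partial>lborel)
      = (\<integral>x. (\<Sum>i<n. \<Sum>j<n. u i j x) \<partial>lborel)"
    unfolding pw u_def ..
  also have "\<dots> = (\<Sum>i<n. (\<integral>x. (\<Sum>j<n. u i j x) \<partial>lborel))"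
    by (rule Bochner_Integration.integral_sum) (rule i2)
  also have "\<dots> = (\<Sum>i<n. \<Sum>j<n. (\<integral>x. u i j x \<partial>lborel))"
    by (intro sum.cong refl Bochner_Integration.integral_sum i1)
  also have "\<dots> = (\<Sum>i<n. \<Sum>j<n. c i * c j * (\<integral>x. indicator {0<..} x * (\<psi> i x * \<psi> j x) \<partial>lborel))"
    unfolding u_def by simp
  also have "\<dots> = quad_form n (gram f) c"
    unfolding quad_form_def gram_def set_lebesgue_integral_def \<psi>_def by simp
  finally show ?thesis unfolding \<psi>_def by simp
qed

lemma quad_form_gram_pos:
  assumes "test_fun f" "\<exists>x. f x \<noteq> 0" "\<exists>k<n. c k \<noteq> 0"
  shows "0 < quad_form n (gram f) c"
proof -
  obtain a b where "0 < a" and supp: "\<And>x. x \<notin> {a..b} \<Longrightarrow> f x = 0" and "smooth_fun f"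
    using assms(1) unfolding test_fun_def by blast
  define F where "F x = (\<Sum>i<n. c i * (deriv ^^ i) f x)" for x
  have q: "quad_form n (gram f) c = (\<integral>x. indicator {0<..} x * (F x)\<^sup>2 \<partial>lborel)"
    unfolding F_def by (rule quad_form_gram[OF assms(1)])
  have "quad_form n (gram f) c \<noteq> 0"
  proof
    assume "quad_form n (gram f) c = 0"
    moreover have "continuous_on UNIV F"
      unfolding F_def[abs_def] by (intro continuous_intros continuous_on_funpow_deriv[OF \<open>smooth_fun f\<close>])
    moreover have "F x = 0" if "x \<notin> {a..b}" for x
      unfolding F_def using funpow_deriv_eq_0_outside[OF supp that] by simp
    ultimately have "F x = 0" for x
      using eq_0_if_integral_square_eq_0[of F a b x] \<open>0 < a\<close> q by simp
    then have "\<forall>i<n. c i = 0"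
      unfolding F_def by (rule funpow_deriv_linearly_independent[OF assms(1,2)])
    then show False using assms(3) by auto
  qed
  moreover have "0 \<le> quad_form n (gram f) c" unfolding q by (intro integral_nonneg_AE) auto
  ultimately show ?thesis by simp
qed

section \<open>White noise\<close>

lemma char_centred_gaussian:
  assumes "prob_space M" and cg: "centred_gaussian M Y v"
  shows "(\<integral>\<omega>. iexp (Y \<omega>) \<partial>M) = exp (- v / 2)"
proof -
  interpret prob_space M by fact
  have mY: "Y \<in> borel_measurable M" and v0: "0 \<le> v" using cg unfolding centred_gaussian_def by auto
  show ?thesis
  proof (cases "v = 0")
    case True
    then have ae: "AE \<omega> in M. Y \<omega> = 0" using cg unfolding centred_gaussian_def by simp
    have "(\<integral>\<omega>. iexp (Y \<omega>) \<partial>M) = (\<integral>\<omega>. 1 \<partial>M)"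
      by (rule integral_cong_AE) (use ae mY in auto)
    then show ?thesis using True by (simp add: prob_space)
  next
    case False
    define \<sigma> where "\<sigma> = sqrt v"
    have s: "0 < \<sigma>" unfolding \<sigma>_def using v0 False by simp
    have dY: "distributed M lborel Y (normal_density 0 \<sigma>)"
      using cg False unfolding centred_gaussian_def \<sigma>_def by simp
    then have dZ: "distributed M lborel (\<lambda>x. (Y x - 0) / \<sigma>) std_normal_density"
      using normal_standard_normal_convert[OF s] by simp
    define Z where "Z x = Y x / \<sigma>" for x
    have dZ': "distr M lborel Z = std_normal_distribution" and mZ: "Z \<in> measurable M lborel"
      using dZ unfolding distributed_def Z_def by auto
    have "(\<integral>\<omega>. iexp (Y \<omega>) \<partial>M) = (\<integral>\<omega>. iexp (\<sigma> * Z \<omega>) \<partial>M)"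
      unfolding Z_def using s by simp
    also have "\<dots> = (\<integral>z. iexp (\<sigma> * z) \<partial>distr M lborel Z)"
      by (rule integral_distr[symmetric, OF mZ]) simp
    also have "\<dots> = char std_normal_distribution \<sigma>" unfolding dZ' char_def by simp
    also have "\<dots> = exp (- (\<sigma>\<^sup>2) / 2)" by (simp add: char_std_normal_distribution)
    also have "\<sigma>\<^sup>2 = v" unfolding \<sigma>_def using v0 by simp
    finally show ?thesis by simp
  qed
qed

lemma prob_space_white_noise: "white_noise M W \<Longrightarrow> prob_space M"
  unfolding white_noise_def by blast

lemma measurable_white_noise: "white_noise M W \<Longrightarrow> test_fun f \<Longrightarrow> W f \<in> borel_measurable M"
  unfolding white_noise_def by blast

lemma char_white_noise:
  assumes "white_noise M W" "\<forall>i<n. test_fun (phis i)"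
  shows "(\<integral>\<omega>. iexp (\<Sum>i<n. c i * W (phis i) \<omega>) \<partial>M)
    = exp (- quad_form n (\<lambda>i j. LINT x:{0<..}|lborel. phis i x * phis j x) c / 2)"
  using assms unfolding white_noise_def quad_form_def
  by (intro char_centred_gaussian) (auto simp: mult_ac)

section \<open>The random vector of the first four derivatives\<close>

lemma vector4_nth:
  "(vector [a, b, c, d] :: real^4) $ 1 = a" "(vector [a, b, c, d] :: real^4) $ 2 = b"
  "(vector [a, b, c, d] :: real^4) $ 3 = c" "(vector [a, b, c, d] :: real^4) $ 4 = d"
  by (simp_all add: vector_def)

lemma sum_lessThan_4: "(\<Sum>k<(4::nat). f k) = f 0 + f 1 + f 2 + (f 3 :: 'a::comm_monoid_add)"
  by (simp add: eval_nat_numeral)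

lemma quad_form_eq_norm_square_linear:
  fixes C :: "real^4 \<Rightarrow> nat \<Rightarrow> real"
  assumes "\<And>i j. g i j = g j i" and pd: "\<And>c. (\<exists>k<4. c k \<noteq> 0) \<Longrightarrow> 0 < quad_form 4 g c"
    and lin: "\<And>k. linear (\<lambda>t. C t k)" and nondeg: "\<And>t. \<forall>k<4. C t k = 0 \<Longrightarrow> t = 0"
  shows "\<exists>A :: real^4 \<Rightarrow> real^4. linear A \<and> inj A \<and> (\<forall>t. quad_form 4 g (C t) = (norm (A t))\<^sup>2)"
proof -
  obtain L where L: "\<And>c. quad_form 4 g c = (\<Sum>i<(4::nat). (\<Sum>k<4. L i k * c k)\<^sup>2)"
    using quad_form_cholesky[of g 4] assms(1,2) by blast
  define r where "r i t = (\<Sum>k<(4::nat). L i k * C t k)" for i t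
  define A where "A t = (vector [r 0 t, r 1 t, r 2 t, r 3 t] :: real^4)" for t
  have "linear (r i)" for i
    unfolding r_def[abs_def]
    by (intro linearI) (simp_all add: linear_add[OF lin] linear_scale[OF lin] sum.distrib
        sum_distrib_left algebra_simps)
  then have "linear A"
    unfolding A_def by (intro linearI) (auto simp: vec_eq_iff forall_4 vector4_nth linear_add linear_scale)
  have norm_A: "quad_form 4 g (C t) = (norm (A t))\<^sup>2" for t
    unfolding L power2_norm_eq_inner A_def
    by (simp add: inner_vec_def sum_4 vector4_nth sum_lessThan_4 r_def power2_eq_square)
  have "t = 0" if "A t = 0" for t
    using pd[of "C t"] norm_A[of t] that nondeg[of t] by force
  then have "inj A" using linear_inj_iff_eq_0[OF \<open>linear A\<close>] by blast
  with \<open>linear A\<close> norm_A show ?thesis by blast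
qed

definition deriv_pair_vector ::
    "((real \<Rightarrow> real) \<Rightarrow> 'a \<Rightarrow> real) \<Rightarrow> (real \<Rightarrow> real) \<Rightarrow> 'a \<Rightarrow> real^4" where
  "deriv_pair_vector W phi \<omega> =
    vector [deriv_pair W 0 phi \<omega>, deriv_pair W 1 phi \<omega>, deriv_pair W 2 phi \<omega>, deriv_pair W 3 phi \<omega>]"

text \<open>The coefficient of \<open>W (\<phi>\<^sup>(\<^sup>k\<^sup>))\<close> in \<open>t \<bullet> deriv_pair_vector W \<phi> \<omega>\<close>; the signs are those
  of \<^const>\<open>deriv_pair\<close>.\<close>

definition deriv_pair_coeff :: "real^4 \<Rightarrow> nat \<Rightarrow> real" where
  "deriv_pair_coeff t k =
    (if k = 0 then t $ 1 else if k = 1 then - t $ 2 else if k = 2 then t $ 3 else - t $ 4)"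

lemma inner_deriv_pair_vector:
  "t \<bullet> deriv_pair_vector W phi \<omega> = (\<Sum>k<4. deriv_pair_coeff t k * W ((deriv ^^ k) phi) \<omega>)"
  by (simp add: deriv_pair_vector_def deriv_pair_coeff_def deriv_pair_def inner_vec_def sum_4
      vector4_nth sum_lessThan_4)

lemma linear_deriv_pair_coeff: "linear (\<lambda>t. deriv_pair_coeff t k)"
  unfolding deriv_pair_coeff_def by (intro linearI) auto

lemma eq_0_if_deriv_pair_coeff_eq_0:
  assumes "\<forall>k<4. deriv_pair_coeff t k = 0"
  shows "t = 0"
proof -
  have "t $ i = 0" for i
    using exhaust_4[of i] assms[rule_format, of 0] assms[rule_format, of 1] assms[rule_format, of 2]
      assms[rule_format, of 3]
    by (auto simp: deriv_pair_coeff_def)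
  then show ?thesis by (simp add: vec_eq_iff)
qed

lemma measurable_deriv_pair_vector:
  assumes "white_noise M W" "test_fun phi"
  shows "deriv_pair_vector W phi \<in> borel_measurable M"
proof (rule borel_measurable_euclidean_space[THEN iffD2], intro ballI)
  fix i :: "real^4"
  have "W ((deriv ^^ k) phi) \<in> borel_measurable M" for k
    by (rule measurable_white_noise[OF assms(1) test_fun_funpow_deriv[OF assms(2)]])
  then show "(\<lambda>\<omega>. deriv_pair_vector W phi \<omega> \<bullet> i) \<in> borel_measurable M"
    by (simp add: inner_commute[of _ i] inner_deriv_pair_vector)
qed

lemma char_deriv_pair_vector:
  assumes "white_noise M W" "test_fun phi"
  shows "(\<integral>x. iexp (t \<bullet> x) \<partial>distr M lborel (deriv_pair_vector W phi))
    = exp (- quad_form 4 (gram phi) (deriv_pair_coeff t) / 2)"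
proof -
  have "deriv_pair_vector W phi \<in> measurable M lborel"
    using measurable_deriv_pair_vector[OF assms] by simp
  moreover have "\<forall>k<4. test_fun ((deriv ^^ k) phi)" by (simp add: test_fun_funpow_deriv[OF assms(2)])
  ultimately show ?thesis
    using integral_distr[of "deriv_pair_vector W phi" M lborel "\<lambda>x. iexp (t \<bullet> x)"]
      char_white_noise[OF assms(1), of 4 "\<lambda>k. (deriv ^^ k) phi" "deriv_pair_coeff t"]
    by (simp add: inner_deriv_pair_vector gram_def[abs_def])
qed

theorem lemma4p1:
  fixes M :: "'a measure" and W :: "(real \<Rightarrow> real) \<Rightarrow> 'a \<Rightarrow> real" and phi :: "real \<Rightarrow> real"
  assumes "white_noise M W"
    and "test_fun phi"
    and "\<exists>x. phi x \<noteq> 0"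
  shows "absolutely_continuous lborel
           (distr M lborel (\<lambda>\<omega>. vector [deriv_pair W 0 phi \<omega>, deriv_pair W 1 phi \<omega>,
                                          deriv_pair W 2 phi \<omega>, deriv_pair W 3 phi \<omega>] :: real ^ 4))"
proof -
  interpret prob_space M by (rule prob_space_white_noise[OF assms(1)])
  obtain A :: "real^4 \<Rightarrow> real^4" where "linear A" "inj A"
    and "\<And>t. quad_form 4 (gram phi) (deriv_pair_coeff t) = (norm (A t))\<^sup>2"
    using quad_form_eq_norm_square_linear[of "gram phi" deriv_pair_coeff, OF gram_sym
        quad_form_gram_pos[OF assms(2,3)] linear_deriv_pair_coeff eq_0_if_deriv_pair_coeff_eq_0]
    by blast
  then have "absolutely_continuous lborel (distr M lborel (deriv_pair_vector W phi))"
    using measurable_deriv_pair_vector[OF assms(1,2)] char_deriv_pair_vector[OF assms(1,2)]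
    by (intro absolutely_continuous_char_gaussian prob_space.finite_measure prob_space_distr) simp_all
  then show ?thesis unfolding deriv_pair_vector_def[abs_def] .
qed

end
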